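(* Assume $a_j\neq0$ for $1\le j\le4$, $v_{12}^2+a_2a_4\neq0$ and $v_{22}^2+a_3a_4\neq0$. Then: (i) $V(\mathbf v,d)\cap H_0$ consists of three distinct points $[0,1,0]$, $[0,r_1,R_1]$, $[0,r_2,R_2]$, where $r_j\neq0$, $R_j\neq0$ and $a_4R_j^2-2v_{12}r_jR_j-a_2r_j^2=0$ for $j=1,2$; (ii) $V(\mathbf v,d)\cap H_1$ consists of three distinct points $[1,0,0]$, $[s_1,0,S_1]$, $[s_2,0,S_2]$, where $s_j\neq0$, $S_j\neq0$ and $a_4S_j^2+2v_{22}s_jS_j-a_3s_j^2=0$ for $j=1,2$; (iii) $V(\mathbf v,d)\cap H_2$ consists only of the two points $[1,0,0]$, $[0,1,0]$; (iv) the four points $[0,r_j,R_j]$, $[s_j,0,S_j]$ ($j=1,2$) are smooth points of $V(\mathbf v,d)$.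
   Context: Parameters $[\mathbf v,d]=[v_{11},v_{12},v_{21},v_{22},d]\in\mathbb{C}P^4$ (complex, not all zero); $a_1=v_{11}-v_{21}-d$, $a_2=-v_{11}-v_{21}+d$, $a_3=v_{11}+v_{21}+d$, $a_4=-v_{11}+v_{21}-d$. On $\mathbb{C}P^2$ with coordinates $[u_0,u_1,u_2]$, $V(\mathbf v,d)$ is the curve $P=0$ where $P=a_4u_2^4+2(v_{22}u_0-v_{12}u_1)u_2^3-(a_3u_0^2+a_2u_1^2)u_2^2+2u_0u_1(v_{22}u_1-v_{12}u_0)u_2+a_1u_0^2u_1^2$, and $H_j=\{[u_0,u_1,u_2]:u_j=0\}$ are the coordinate lines. A point of $V$ is smooth if not all partial derivatives of $P$ vanish there. *)

theory Defs
  imports "HOL-Analysis.Analysis"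
begin

type_synonym cpt = "complex \<times> complex \<times> complex"

definition a1 :: "complex \<Rightarrow> complex \<Rightarrow> complex \<Rightarrow> complex \<Rightarrow> complex \<Rightarrow> complex" where
  "a1 v11 v12 v21 v22 d = v11 - v21 - d"
definition a2 :: "complex \<Rightarrow> complex \<Rightarrow> complex \<Rightarrow> complex \<Rightarrow> complex \<Rightarrow> complex" where
  "a2 v11 v12 v21 v22 d = - v11 - v21 + d"
definition a3 :: "complex \<Rightarrow> complex \<Rightarrow> complex \<Rightarrow> complex \<Rightarrow> complex \<Rightarrow> complex" where
  "a3 v11 v12 v21 v22 d = v11 + v21 + d"
definition a4 :: "complex \<Rightarrow> complex \<Rightarrow> complex \<Rightarrow> complex \<Rightarrow> complex \<Rightarrow> complex" where
  "a4 v11 v12 v21 v22 d = - v11 + v21 - d"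

definition Ppoly :: "complex \<Rightarrow> complex \<Rightarrow> complex \<Rightarrow> complex \<Rightarrow> complex \<Rightarrow> cpt \<Rightarrow> complex" where
  "Ppoly v11 v12 v21 v22 d u = (case u of (u0, u1, u2) \<Rightarrow>
     a4 v11 v12 v21 v22 d * u2^4 + 2 * (v22 * u0 - v12 * u1) * u2^3
     - (a3 v11 v12 v21 v22 d * u0^2 + a2 v11 v12 v21 v22 d * u1^2) * u2^2
     + 2 * u0 * u1 * (v22 * u1 - v12 * u0) * u2
     + a1 v11 v12 v21 v22 d * u0^2 * u1^2)"

definition proj_pt :: "cpt \<Rightarrow> cpt set" where
  "proj_pt u = {w. \<exists>c. c \<noteq> 0 \<and> w = (c * fst u, c * fst (snd u), c * snd (snd u))}"

definition curveV :: "complex \<Rightarrow> complex \<Rightarrow> complex \<Rightarrow> complex \<Rightarrow> complex \<Rightarrow> cpt set set" where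
  "curveV v11 v12 v21 v22 d =
     {proj_pt u | u. u \<noteq> (0, 0, 0) \<and> Ppoly v11 v12 v21 v22 d u = 0}"

definition H0 :: "cpt set set" where
  "H0 = {proj_pt u | u. u \<noteq> (0, 0, 0) \<and> fst u = 0}"
definition H1 :: "cpt set set" where
  "H1 = {proj_pt u | u. u \<noteq> (0, 0, 0) \<and> fst (snd u) = 0}"
definition H2 :: "cpt set set" where
  "H2 = {proj_pt u | u. u \<noteq> (0, 0, 0) \<and> snd (snd u) = 0}"

definition smooth_point :: "complex \<Rightarrow> complex \<Rightarrow> complex \<Rightarrow> complex \<Rightarrow> complex \<Rightarrow> cpt \<Rightarrow> bool" where
  "smooth_point v11 v12 v21 v22 d u \<longleftrightarrow>
     u \<noteq> (0, 0, 0) \<and> Ppoly v11 v12 v21 v22 d u = 0 \<and>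
     \<not> (deriv (\<lambda>t. Ppoly v11 v12 v21 v22 d (t, fst (snd u), snd (snd u))) (fst u) = 0 \<and>
        deriv (\<lambda>t. Ppoly v11 v12 v21 v22 d (fst u, t, snd (snd u))) (fst (snd u)) = 0 \<and>
        deriv (\<lambda>t. Ppoly v11 v12 v21 v22 d (fst u, fst (snd u), t)) (snd (snd u)) = 0)"

end

theory Submission
  imports Defs
begin

text \<open>On each coordinate line P restricts to a binary quartic. On H2 it is
  a1 u0^2 u1^2, vanishing only at [1,0,0] and [0,1,0]. On H0 it is u2^2 times the
  quadratic form a4 u2^2 - 2 v12 u1 u2 - a2 u1^2, whose discriminant v12^2 + a2 a4 is
  nonzero; as a2 \<noteq> 0, the form splits into two distinct linear factors u2 - R u1
  with R \<noteq> 0, giving [0,1,0] and the two points [0,1,R]. At such a point the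
  u2-derivative of P is 2 R^2 (a4 R - v12), and a4 R - v12 is a square root of the
  discriminant, so the point is smooth. H1 is the same with (v12, a2) replaced by
  (-v22, a3).\<close>

definition smult3 :: "complex \<Rightarrow> cpt \<Rightarrow> cpt" where
  "smult3 c u = (c * fst u, c * fst (snd u), c * snd (snd u))"

lemma proj_pt_altdef: "proj_pt u = {smult3 c u | c. c \<noteq> 0}"
  by (auto simp: proj_pt_def smult3_def)

lemma smult3_1 [simp]: "smult3 1 u = u"
  by (simp add: smult3_def)

lemma smult3_smult3 [simp]: "smult3 a (smult3 b u) = smult3 (a * b) u"
  by (simp add: smult3_def mult.assoc)

lemma proj_pt_smult3:
  assumes "c \<noteq> 0" shows "proj_pt (smult3 c u) = proj_pt u"
proof (rule set_eqI, rule iffI)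
  fix w assume "w \<in> proj_pt (smult3 c u)"
  then obtain a where "a \<noteq> 0" "w = smult3 (a * c) u"
    by (auto simp: proj_pt_altdef)
  then show "w \<in> proj_pt u"
    using assms by (auto simp: proj_pt_altdef)
next
  fix w assume "w \<in> proj_pt u"
  then obtain b where "b \<noteq> 0" "w = smult3 b u"
    by (auto simp: proj_pt_altdef)
  then show "w \<in> proj_pt (smult3 c u)"
    using assms by (auto simp: proj_pt_altdef intro!: exI[of _ "b / c"])
qed

lemma proj_pt_eq_iff: "proj_pt u = proj_pt v \<longleftrightarrow> (\<exists>c. c \<noteq> 0 \<and> u = smult3 c v)"
proof
  assume "proj_pt u = proj_pt v"
  moreover have "u \<in> proj_pt u"
    unfolding proj_pt_altdef by (auto intro!: exI[of _ 1])
  ultimately show "\<exists>c. c \<noteq> 0 \<and> u = smult3 c v"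
    unfolding proj_pt_altdef by blast
qed (auto simp: proj_pt_smult3)

lemma proj_pt_line_eq_iff:
  "proj_pt (0, 1, x) = proj_pt (0, 1, y) \<longleftrightarrow> x = y"
  "proj_pt (1, 0, x) = proj_pt (1, 0, y) \<longleftrightarrow> x = y"
  by (auto simp: proj_pt_eq_iff smult3_def)

lemma proj_set_Int:
  assumes "\<And>c u. c \<noteq> 0 \<Longrightarrow> Q1 (smult3 c u) \<longleftrightarrow> Q1 u"
    and "\<And>c u. c \<noteq> 0 \<Longrightarrow> Q2 (smult3 c u) \<longleftrightarrow> Q2 u"
  shows "{proj_pt u | u. u \<noteq> (0, 0, 0) \<and> Q1 u} \<inter> {proj_pt u | u. u \<noteq> (0, 0, 0) \<and> Q2 u}
       = {proj_pt u | u. u \<noteq> (0, 0, 0) \<and> Q1 u \<and> Q2 u}"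
proof -
  have "Q2 u" if eq: "proj_pt u = proj_pt v" and "Q2 v" for u v
  proof -
    obtain c where "c \<noteq> 0" "u = smult3 c v"
      using eq unfolding proj_pt_eq_iff by blast
    then show "Q2 u" using \<open>Q2 v\<close> assms(2) by simp
  qed
  then show ?thesis by blast
qed

lemma proj_set_eq_image:
  assumes "\<And>p. p \<in> S \<Longrightarrow> p \<noteq> (0, 0, 0) \<and> Q p"
    and "\<And>u. u \<noteq> (0, 0, 0) \<Longrightarrow> Q u \<Longrightarrow> \<exists>p\<in>S. \<exists>c. c \<noteq> 0 \<and> u = smult3 c p"
  shows "{proj_pt u | u. u \<noteq> (0, 0, 0) \<and> Q u} = proj_pt ` S"
  using assms by (fastforce simp: proj_pt_smult3)

lemma Ppoly_smult3:
  "Ppoly v11 v12 v21 v22 d (smult3 c u) = c^4 * Ppoly v11 v12 v21 v22 d u"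
  by (cases u) (simp add: Ppoly_def smult3_def algebra_simps power2_eq_square power3_eq_cube power4_eq_xxxx)

lemma curveV_Int_H0:
  "curveV v11 v12 v21 v22 d \<inter> H0 =
     {proj_pt u | u. u \<noteq> (0, 0, 0) \<and> Ppoly v11 v12 v21 v22 d u = 0 \<and> fst u = 0}"
  unfolding curveV_def H0_def by (rule proj_set_Int) (simp add: Ppoly_smult3, simp add: smult3_def)

lemma curveV_Int_H1:
  "curveV v11 v12 v21 v22 d \<inter> H1 =
     {proj_pt u | u. u \<noteq> (0, 0, 0) \<and> Ppoly v11 v12 v21 v22 d u = 0 \<and> fst (snd u) = 0}"
  unfolding curveV_def H1_def by (rule proj_set_Int) (simp add: Ppoly_smult3, simp add: smult3_def)

lemma curveV_Int_H2:
  "curveV v11 v12 v21 v22 d \<inter> H2 =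
     {proj_pt u | u. u \<noteq> (0, 0, 0) \<and> Ppoly v11 v12 v21 v22 d u = 0 \<and> snd (snd u) = 0}"
  unfolding curveV_def H2_def by (rule proj_set_Int) (simp add: Ppoly_smult3, simp add: smult3_def)

definition line_quartic :: "complex \<Rightarrow> complex \<Rightarrow> complex \<Rightarrow> complex \<Rightarrow> complex \<Rightarrow> complex" where
  "line_quartic A B C b c = c^2 * (A * c^2 - 2 * B * b * c - C * b^2)"

lemma Ppoly_on_H0:
  "Ppoly v11 v12 v21 v22 d (0, b, c) =
     line_quartic (a4 v11 v12 v21 v22 d) v12 (a2 v11 v12 v21 v22 d) b c"
  by (simp add: Ppoly_def line_quartic_def algebra_simps power2_eq_square power3_eq_cube power4_eq_xxxx)

lemma Ppoly_on_H1:
  "Ppoly v11 v12 v21 v22 d (b, 0, c) =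
     line_quartic (a4 v11 v12 v21 v22 d) (- v22) (a3 v11 v12 v21 v22 d) b c"
  by (simp add: Ppoly_def line_quartic_def algebra_simps power2_eq_square power3_eq_cube power4_eq_xxxx)

lemma Ppoly_on_H2: "Ppoly v11 v12 v21 v22 d (b, c, 0) = a1 v11 v12 v21 v22 d * b^2 * c^2"
  by (simp add: Ppoly_def)

lemma quadratic_form_factors:
  fixes A B C :: complex
  assumes "A \<noteq> 0" "C \<noteq> 0" "B^2 + C * A \<noteq> 0"
  obtains R1 R2 where "\<And>b c. A * c^2 - 2 * B * b * c - C * b^2 = A * (c - R1 * b) * (c - R2 * b)"
    and "R1 \<noteq> R2" "R1 \<noteq> 0" "R2 \<noteq> 0" "A * R1 \<noteq> B" "A * R2 \<noteq> B"
proof -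
  define w where "w = csqrt (B^2 + C * A)"
  have w2: "w^2 = B^2 + C * A" and "w \<noteq> 0"
    using assms(3) by (simp_all add: w_def)
  define R1 R2 where "R1 = (B + w) / A" and "R2 = (B - w) / A"
  have factor: "A * c^2 - 2 * B * b * c - C * b^2 = A * (c - R1 * b) * (c - R2 * b)" for b c
  proof -
    have "A * (c - R1 * b) * (c - R2 * b) = ((A * c - B * b)^2 - w^2 * b^2) / A"
      using assms(1) by (simp add: R1_def R2_def field_simps power2_eq_square)
    also have "\<dots> = A * c^2 - 2 * B * b * c - C * b^2"
      unfolding w2 using assms(1) by (simp add: field_simps power2_eq_square)
    finally show ?thesis by simp
  qed
  have R1w: "A * R1 - B = w" and R2w: "A * R2 - B = - w"
    using assms(1) by (simp_all add: R1_def R2_def)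
  then have "R1 \<noteq> R2" "A * R1 \<noteq> B" "A * R2 \<noteq> B"
    using \<open>w \<noteq> 0\<close> by auto
  moreover have "R1 \<noteq> 0" "R2 \<noteq> 0"
    using factor[where b = 1 and c = 0] assms(2) by auto
  ultimately show thesis
    using factor that by blast
qed

lemma line_quartic_zero_cases:
  assumes "A \<noteq> 0" "\<And>b c. A * c^2 - 2 * B * b * c - C * b^2 = A * (c - R1 * b) * (c - R2 * b)"
    and "(b, c) \<noteq> (0, 0)" "line_quartic A B C b c = 0"
  obtains R where "R \<in> {0, R1, R2}" "b \<noteq> 0" "c = b * R"
proof -
  have "c = 0 \<or> c = R1 * b \<or> c = R2 * b"
    using assms(1,4) by (simp add: line_quartic_def assms(2))
  moreover have "b \<noteq> 0"
    using calculation assms(3) by auto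
  ultimately show thesis
    using that by (metis insert_iff mult.commute mult_zero_right)
qed

lemma deriv_line_quartic_at_root:
  assumes "A * R^2 - 2 * B * R - C = 0"
  shows "deriv (line_quartic A B C 1) R = 2 * R^2 * (A * R - B)"
proof -
  have "((\<lambda>c. c^2 * (A * c^2 - 2 * B * c - C)) has_field_derivative
          2 * R * (A * R^2 - 2 * B * R - C) + R^2 * (2 * A * R - 2 * B)) (at R)"
    by (auto intro!: derivative_eq_intros simp: power2_eq_square)
  then have "deriv (line_quartic A B C 1) R = 2 * R * (A * R^2 - 2 * B * R - C) + R^2 * (2 * A * R - 2 * B)"
    by (intro DERIV_imp_deriv) (simp add: line_quartic_def[abs_def])
  then show ?thesis
    unfolding assms by (simp add: algebra_simps)
qed

lemma curveV_Int_H0_eq: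
  assumes "a4 v11 v12 v21 v22 d \<noteq> 0"
    and "\<And>b c. a4 v11 v12 v21 v22 d * c^2 - 2 * v12 * b * c - a2 v11 v12 v21 v22 d * b^2
                = a4 v11 v12 v21 v22 d * (c - R1 * b) * (c - R2 * b)"
  shows "curveV v11 v12 v21 v22 d \<inter> H0 = {proj_pt (0, 1, 0), proj_pt (0, 1, R1), proj_pt (0, 1, R2)}"
proof -
  have "curveV v11 v12 v21 v22 d \<inter> H0 = proj_pt ` {(0, 1, 0), (0, 1, R1), (0, 1, R2)}"
    unfolding curveV_Int_H0
  proof (rule proj_set_eq_image)
    fix p :: cpt assume "p \<in> {(0, 1, 0), (0, 1, R1), (0, 1, R2)}"
    then obtain R where "p = (0, 1, R)" "R \<in> {0, R1, R2}"
      by blast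
    moreover have "line_quartic (a4 v11 v12 v21 v22 d) v12 (a2 v11 v12 v21 v22 d) 1 R = 0"
      using \<open>R \<in> {0, R1, R2}\<close> unfolding line_quartic_def assms(2) by auto
    ultimately show "p \<noteq> (0, 0, 0) \<and> Ppoly v11 v12 v21 v22 d p = 0 \<and> fst p = 0"
      by (simp add: Ppoly_on_H0)
  next
    fix u :: cpt assume "u \<noteq> (0, 0, 0)" "Ppoly v11 v12 v21 v22 d u = 0 \<and> fst u = 0"
    then obtain b c where u: "u = (0, b, c)" "(b, c) \<noteq> (0, 0)"
      and "line_quartic (a4 v11 v12 v21 v22 d) v12 (a2 v11 v12 v21 v22 d) b c = 0"
      by (cases u) (auto simp: Ppoly_on_H0)
    then obtain R where "R \<in> {0, R1, R2}" "b \<noteq> 0" "c = b * R"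
      using line_quartic_zero_cases[OF assms] by blast
    then show "\<exists>p\<in>{(0, 1, 0), (0, 1, R1), (0, 1, R2)}. \<exists>k. k \<noteq> 0 \<and> u = smult3 k p"
      using u by (auto simp: smult3_def)
  qed
  then show ?thesis by simp
qed

lemma curveV_Int_H1_eq:
  assumes "a4 v11 v12 v21 v22 d \<noteq> 0"
    and "\<And>b c. a4 v11 v12 v21 v22 d * c^2 - 2 * (- v22) * b * c - a3 v11 v12 v21 v22 d * b^2
                = a4 v11 v12 v21 v22 d * (c - S1 * b) * (c - S2 * b)"
  shows "curveV v11 v12 v21 v22 d \<inter> H1 = {proj_pt (1, 0, 0), proj_pt (1, 0, S1), proj_pt (1, 0, S2)}"
proof -
  have "curveV v11 v12 v21 v22 d \<inter> H1 = proj_pt ` {(1, 0, 0), (1, 0, S1), (1, 0, S2)}"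
    unfolding curveV_Int_H1
  proof (rule proj_set_eq_image)
    fix p :: cpt assume "p \<in> {(1, 0, 0), (1, 0, S1), (1, 0, S2)}"
    then obtain S where "p = (1, 0, S)" "S \<in> {0, S1, S2}"
      by blast
    moreover have "line_quartic (a4 v11 v12 v21 v22 d) (- v22) (a3 v11 v12 v21 v22 d) 1 S = 0"
      using \<open>S \<in> {0, S1, S2}\<close> unfolding line_quartic_def assms(2) by auto
    ultimately show "p \<noteq> (0, 0, 0) \<and> Ppoly v11 v12 v21 v22 d p = 0 \<and> fst (snd p) = 0"
      by (simp add: Ppoly_on_H1)
  next
    fix u :: cpt assume "u \<noteq> (0, 0, 0)" "Ppoly v11 v12 v21 v22 d u = 0 \<and> fst (snd u) = 0"
    then obtain b c where u: "u = (b, 0, c)" "(b, c) \<noteq> (0, 0)"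
      and "line_quartic (a4 v11 v12 v21 v22 d) (- v22) (a3 v11 v12 v21 v22 d) b c = 0"
      by (cases u) (auto simp: Ppoly_on_H1)
    then obtain S where "S \<in> {0, S1, S2}" "b \<noteq> 0" "c = b * S"
      using line_quartic_zero_cases[OF assms] by blast
    then show "\<exists>p\<in>{(1, 0, 0), (1, 0, S1), (1, 0, S2)}. \<exists>k. k \<noteq> 0 \<and> u = smult3 k p"
      using u by (auto simp: smult3_def)
  qed
  then show ?thesis by simp
qed

lemma curveV_Int_H2_eq:
  assumes "a1 v11 v12 v21 v22 d \<noteq> 0"
  shows "curveV v11 v12 v21 v22 d \<inter> H2 = {proj_pt (1, 0, 0), proj_pt (0, 1, 0)}"
proof -
  have "curveV v11 v12 v21 v22 d \<inter> H2 = proj_pt ` {(1, 0, 0), (0, 1, 0)}"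
    unfolding curveV_Int_H2
  proof (rule proj_set_eq_image)
    fix p :: cpt assume "p \<in> {(1, 0, 0), (0, 1, 0)}"
    then show "p \<noteq> (0, 0, 0) \<and> Ppoly v11 v12 v21 v22 d p = 0 \<and> snd (snd p) = 0"
      by (auto simp: Ppoly_on_H2)
  next
    fix u :: cpt assume "u \<noteq> (0, 0, 0)" "Ppoly v11 v12 v21 v22 d u = 0 \<and> snd (snd u) = 0"
    then obtain b c where "u = (b, 0, 0) \<and> b \<noteq> 0 \<or> u = (0, c, 0) \<and> c \<noteq> 0"
      using assms by (cases u) (auto simp: Ppoly_on_H2)
    then show "\<exists>p\<in>{(1, 0, 0), (0, 1, 0)}. \<exists>k. k \<noteq> 0 \<and> u = smult3 k p"
      by (auto simp: smult3_def)
  qed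
  then show ?thesis by simp
qed

lemma smooth_point_on_H0:
  assumes "a4 v11 v12 v21 v22 d * R^2 - 2 * v12 * R - a2 v11 v12 v21 v22 d = 0"
    and "R \<noteq> 0" "a4 v11 v12 v21 v22 d * R \<noteq> v12"
  shows "smooth_point v11 v12 v21 v22 d (0, 1, R)"
proof -
  have "(\<lambda>t. Ppoly v11 v12 v21 v22 d (0, 1, t)) = line_quartic (a4 v11 v12 v21 v22 d) v12 (a2 v11 v12 v21 v22 d) 1"
    by (simp add: fun_eq_iff Ppoly_on_H0)
  then have "deriv (\<lambda>t. Ppoly v11 v12 v21 v22 d (0, 1, t)) R \<noteq> 0"
    using deriv_line_quartic_at_root[OF assms(1)] assms(2,3) by simp
  moreover have "Ppoly v11 v12 v21 v22 d (0, 1, R) = 0"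
    using assms(1) by (simp add: Ppoly_on_H0 line_quartic_def)
  ultimately show ?thesis
    by (simp add: smooth_point_def)
qed

lemma smooth_point_on_H1:
  assumes "a4 v11 v12 v21 v22 d * S^2 - 2 * (- v22) * S - a3 v11 v12 v21 v22 d = 0"
    and "S \<noteq> 0" "a4 v11 v12 v21 v22 d * S \<noteq> - v22"
  shows "smooth_point v11 v12 v21 v22 d (1, 0, S)"
proof -
  have "(\<lambda>t. Ppoly v11 v12 v21 v22 d (1, 0, t)) = line_quartic (a4 v11 v12 v21 v22 d) (- v22) (a3 v11 v12 v21 v22 d) 1"
    by (simp add: fun_eq_iff Ppoly_on_H1)
  then have "deriv (\<lambda>t. Ppoly v11 v12 v21 v22 d (1, 0, t)) S \<noteq> 0"
    using deriv_line_quartic_at_root[OF assms(1)] assms(2,3) by (simp add: eq_neg_iff_add_eq_0)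
  moreover have "Ppoly v11 v12 v21 v22 d (1, 0, S) = 0"
    using assms(1) by (simp add: Ppoly_on_H1 line_quartic_def)
  ultimately show ?thesis
    by (simp add: smooth_point_def)
qed

theorem lemma6p4:
  fixes v11 v12 v21 v22 d :: complex
  assumes "(v11, v12, v21, v22, d) \<noteq> (0, 0, 0, 0, 0)"
    and "a1 v11 v12 v21 v22 d \<noteq> 0" and "a2 v11 v12 v21 v22 d \<noteq> 0"
    and "a3 v11 v12 v21 v22 d \<noteq> 0" and "a4 v11 v12 v21 v22 d \<noteq> 0"
    and "v12^2 + a2 v11 v12 v21 v22 d * a4 v11 v12 v21 v22 d \<noteq> 0"
    and "v22^2 + a3 v11 v12 v21 v22 d * a4 v11 v12 v21 v22 d \<noteq> 0"
  shows "\<exists>r1 R1 r2 R2 s1 S1 s2 S2 :: complex.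
     curveV v11 v12 v21 v22 d \<inter> H0 = {proj_pt (0, 1, 0), proj_pt (0, r1, R1), proj_pt (0, r2, R2)}
   \<and> card {proj_pt (0, 1, 0), proj_pt (0, r1, R1), proj_pt (0, r2, R2)} = 3
   \<and> r1 \<noteq> 0 \<and> R1 \<noteq> 0 \<and> r2 \<noteq> 0 \<and> R2 \<noteq> 0
   \<and> a4 v11 v12 v21 v22 d * R1^2 - 2 * v12 * r1 * R1 - a2 v11 v12 v21 v22 d * r1^2 = 0
   \<and> a4 v11 v12 v21 v22 d * R2^2 - 2 * v12 * r2 * R2 - a2 v11 v12 v21 v22 d * r2^2 = 0
   \<and> curveV v11 v12 v21 v22 d \<inter> H1 = {proj_pt (1, 0, 0), proj_pt (s1, 0, S1), proj_pt (s2, 0, S2)}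
   \<and> card {proj_pt (1, 0, 0), proj_pt (s1, 0, S1), proj_pt (s2, 0, S2)} = 3
   \<and> s1 \<noteq> 0 \<and> S1 \<noteq> 0 \<and> s2 \<noteq> 0 \<and> S2 \<noteq> 0
   \<and> a4 v11 v12 v21 v22 d * S1^2 + 2 * v22 * s1 * S1 - a3 v11 v12 v21 v22 d * s1^2 = 0
   \<and> a4 v11 v12 v21 v22 d * S2^2 + 2 * v22 * s2 * S2 - a3 v11 v12 v21 v22 d * s2^2 = 0
   \<and> curveV v11 v12 v21 v22 d \<inter> H2 = {proj_pt (1, 0, 0), proj_pt (0, 1, 0)}
   \<and> smooth_point v11 v12 v21 v22 d (0, r1, R1) \<and> smooth_point v11 v12 v21 v22 d (0, r2, R2)
   \<and> smooth_point v11 v12 v21 v22 d (s1, 0, S1) \<and> smooth_point v11 v12 v21 v22 d (s2, 0, S2)"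
proof -
  let ?a2 = "a2 v11 v12 v21 v22 d" and ?a3 = "a3 v11 v12 v21 v22 d" and ?a4 = "a4 v11 v12 v21 v22 d"
  obtain R1 R2 where R: "\<And>b c. ?a4 * c^2 - 2 * v12 * b * c - ?a2 * b^2 = ?a4 * (c - R1 * b) * (c - R2 * b)"
      "R1 \<noteq> R2" "R1 \<noteq> 0" "R2 \<noteq> 0" "?a4 * R1 \<noteq> v12" "?a4 * R2 \<noteq> v12"
    using quadratic_form_factors[OF assms(5,3,6)] by blast
  have "(- v22)^2 + ?a3 * ?a4 \<noteq> 0"
    using assms(7) by simp
  then obtain S1 S2 where S: "\<And>b c. ?a4 * c^2 - 2 * (- v22) * b * c - ?a3 * b^2 = ?a4 * (c - S1 * b) * (c - S2 * b)"
      "S1 \<noteq> S2" "S1 \<noteq> 0" "S2 \<noteq> 0" "?a4 * S1 \<noteq> - v22" "?a4 * S2 \<noteq> - v22"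
    using quadratic_form_factors[OF assms(5,4)] by blast
  have R_roots: "?a4 * R1^2 - 2 * v12 * R1 - ?a2 = 0" "?a4 * R2^2 - 2 * v12 * R2 - ?a2 = 0"
    using R(1)[where b = 1 and c = R1] R(1)[where b = 1 and c = R2] by simp_all
  have S_roots: "?a4 * S1^2 - 2 * (- v22) * S1 - ?a3 = 0" "?a4 * S2^2 - 2 * (- v22) * S2 - ?a3 = 0"
    using S(1)[where b = 1 and c = S1] S(1)[where b = 1 and c = S2] by simp_all
  show ?thesis
    apply (rule exI[of _ 1], rule exI[of _ R1], rule exI[of _ 1], rule exI[of _ R2])
    apply (rule exI[of _ 1], rule exI[of _ S1], rule exI[of _ 1], rule exI[of _ S2])
    using curveV_Int_H0_eq[OF assms(5) R(1)] curveV_Int_H1_eq[OF assms(5) S(1)] curveV_Int_H2_eq[OF assms(2)]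
      smooth_point_on_H0[OF R_roots(1) R(3,5)] smooth_point_on_H0[OF R_roots(2) R(4,6)]
      smooth_point_on_H1[OF S_roots(1) S(3,5)] smooth_point_on_H1[OF S_roots(2) S(4,6)]
      R_roots S_roots R(2-4) S(2-4)
    by (simp add: proj_pt_line_eq_iff)
qed

end
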